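(* Let $d=1$, $I=[a,b]$ with $a<b$, and let $\sigma$ be as in the context with $\sigma(1)<1$ and the exponent $\alpha$ of condition $(\Sigma3)$ satisfying $\alpha>2$. Let $f\in C([a,b])$. Then $$\|K_n(f,\cdot)-f(\cdot)\|_\infty=o(n^{-1}),\qquad n\to+\infty,$$ if and only if $f$ is constant on $[a,b]$.
   Context: $\sigma:\mathbb R\to\mathbb R$ is a non-decreasing sigmoidal function ($\lim_{x\to-\infty}\sigma(x)=0$, $\lim_{x\to+\infty}\sigma(x)=1$) satisfying: $(\Sigma1)$ $\sigma(x)-1/2$ is odd; $(\Sigma2)$ $\sigma\in C^2(\mathbb R)$ and concave on $[0,+\infty)$; $(\Sigma3)$ $\sigma(x)=\mathcal O(|x|^{-1-\alpha})$ as $x\to-\infty$ for some $\alpha>0$. $\phi_\sigma(x):=\frac12[\sigma(x+1)-\sigma(x-1)]$. With $\mathcal K_n:=\{k\in\mathbb Z:\lceil na\rceil\le k\le\lfloor nb\rfloor-1\}$, for $n\in\mathbb N^+$ and $x\in[a,b]$, $$K_n(f,x):=\frac{\sum_{k\in\mathcal K_n}\big[n\int_{k/n}^{(k+1)/n}f(u)du\big]\phi_\sigma(nx-k)}{\sum_{k\in\mathcal K_n}\phi_\sigma(nx-k)},$$ and $\|\cdot\|_\infty$ is the sup-norm on $[a,b]$. *)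

theory Defs
  imports "HOL-Analysis.Analysis" "HOL-Library.Landau_Symbols"
begin

definition sigmoidal :: "(real \<Rightarrow> real) \<Rightarrow> bool" where
  "sigmoidal \<sigma> \<longleftrightarrow> mono \<sigma> \<and> (\<sigma> \<longlongrightarrow> 0) at_bot \<and> (\<sigma> \<longlongrightarrow> 1) at_top"

definition Sigma1 :: "(real \<Rightarrow> real) \<Rightarrow> bool" where
  "Sigma1 \<sigma> \<longleftrightarrow> (\<forall>x. \<sigma> (-x) - 1/2 = - (\<sigma> x - 1/2))"

definition Sigma2 :: "(real \<Rightarrow> real) \<Rightarrow> bool" where
  "Sigma2 \<sigma> \<longleftrightarrow>
     (\<exists>\<sigma>1 \<sigma>2. (\<forall>x. (\<sigma> has_real_derivative \<sigma>1 x) (at x)) \<and>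
               (\<forall>x. (\<sigma>1 has_real_derivative \<sigma>2 x) (at x)) \<and>
               continuous_on UNIV \<sigma>2) \<and>
     concave_on {0..} \<sigma>"

definition Sigma3 :: "(real \<Rightarrow> real) \<Rightarrow> real \<Rightarrow> bool" where
  "Sigma3 \<sigma> \<alpha> \<longleftrightarrow> \<alpha> > 0 \<and> \<sigma> \<in> O[at_bot](\<lambda>x. \<bar>x\<bar> powr (-1 - \<alpha>))"

definition phi_sigma :: "(real \<Rightarrow> real) \<Rightarrow> real \<Rightarrow> real" where
  "phi_sigma \<sigma> x = (\<sigma> (x + 1) - \<sigma> (x - 1)) / 2"

definition Kset :: "real \<Rightarrow> real \<Rightarrow> nat \<Rightarrow> int set" where
  "Kset a b n = {k. \<lceil>real n * a\<rceil> \<le> k \<and> k \<le> \<lfloor>real n * b\<rfloor> - 1}"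

definition kantorovich_nn ::
  "(real \<Rightarrow> real) \<Rightarrow> real \<Rightarrow> real \<Rightarrow> nat \<Rightarrow> (real \<Rightarrow> real) \<Rightarrow> real \<Rightarrow> real" where
  "kantorovich_nn \<sigma> a b n f x =
     (\<Sum>k\<in>Kset a b n. (real n * integral {real_of_int k / real n .. (real_of_int k + 1) / real n} f)
                       * phi_sigma \<sigma> (real n * x - real_of_int k))
     / (\<Sum>k\<in>Kset a b n. phi_sigma \<sigma> (real n * x - real_of_int k))"

definition err_sup ::
  "(real \<Rightarrow> real) \<Rightarrow> real \<Rightarrow> real \<Rightarrow> (real \<Rightarrow> real) \<Rightarrow> nat \<Rightarrow> real" where
  "err_sup \<sigma> a b f n = (SUP x\<in>{a..b}. \<bar>kantorovich_nn \<sigma> a b n f x - f x\<bar>)"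

end

theory Submission
  imports Defs "HOL-Real_Asymp.Real_Asymp"
begin

text \<open>
  The Kantorovich operator averages \<open>f\<close> over the cells \<open>[k/n, (k+1)/n]\<close>, whose centres sit
  half a cell to the right of the nodes \<open>k/n\<close>; this shift causes an error of exact order
  \<open>1/n\<close> unless \<open>f\<close> is constant. To detect it, pair \<open>K_n f - f\<close> with the primitive \<open>g\<close>
  of a Lipschitz test function \<open>h\<close> of mean zero supported inside \<open>(a, b)\<close>. Transposing the
  operator (a summation by parts against the central differences of the cell averages of
  \<open>\<sigma>\<close>) turns \<open>g\<close> into \<open>g - h/(2n) + O(1/n\<^sup>2)\<close>: the symmetry of \<open>\<sigma>\<close> makes its
  defect from the Heaviside step antisymmetric, and the decay with \<open>\<alpha> > 2\<close> makes this
  defect summable against \<open>|m|\<close>. As \<open>K_n\<close> almost reproduces constants away from the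
  endpoints, this gives
  \<open>|\<integral> f h| \<le> C (1/n + n \<parallel>K_n f - f\<parallel> + n \<sigma>(2 - n\<delta>/2))\<close>,
  so \<open>\<parallel>K_n f - f\<parallel> = o(1/n)\<close> forces \<open>\<integral> f h = 0\<close>. With \<open>h\<close> the difference of two
  narrow tents, \<open>f\<close> takes the same value at any two interior points. Conversely, \<open>K_n\<close>
  reproduces constants exactly once \<open>n (b - a) \<ge> 2\<close>.
\<close>

lemma sum_int_central_telescope:
  fixes F :: "int \<Rightarrow> 'a::ab_group_add"
  assumes "p \<le> q + 1"
  shows "(\<Sum>k\<in>{p..q}. F (k - 1) - F (k + 1)) = F (p - 1) + F p - F q - F (q + 1)"
proof -
  have "p - 1 \<le> q" using assms by simp
  then show ?thesis
  proof (induction q rule: int_ge_induct)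
    case (step i)
    have "{p..i + 1} = insert (i + 1) {p..i}" using step.hyps by auto
    then show ?case using step by simp
  qed simp
qed

lemma sum_symmetric_inverse_square_le:
  "(\<Sum>m\<in>{-int N..int N}. 1 / (real_of_int \<bar>m\<bar> + 1)^2) \<le> 3 - 2 / (real N + 1)"
proof (induction N)
  case (Suc N)
  have "{-int (Suc N)..int (Suc N)} = insert (int N + 1) (insert (- int N - 1) {-int N..int N})"
    by auto
  then have "(\<Sum>m\<in>{-int (Suc N)..int (Suc N)}. 1 / (real_of_int \<bar>m\<bar> + 1)^2)
      = 2 / (real N + 2)^2 + (\<Sum>m\<in>{-int N..int N}. 1 / (real_of_int \<bar>m\<bar> + 1)^2)"
    by (simp add: add.commute)
  also have "\<dots> \<le> 2 / (real N + 2)^2 + 3 - 2 / (real N + 1)"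
    using Suc.IH by simp
  also have "\<dots> \<le> 3 - 2 / (real N + 2)"
  proof -
    \<comment> \<open>the new terms are dominated by the telescoping gap 2/(N+1) - 2/(N+2)\<close>
    have "2 / (real N + 2)^2 \<le> 2 / ((real N + 1) * (real N + 2))"
      by (intro divide_left_mono) (auto simp: power2_eq_square)
    also have "\<dots> = 2 / (real N + 1) - 2 / (real N + 2)"
      by (simp add: field_simps)
    finally show ?thesis by linarith
  qed
  finally show ?case by (simp add: add.commute)
qed simp

lemma sum_inverse_square_le_3:
  "(\<Sum>i\<in>{A..B::int}. 1 / (real_of_int \<bar>i - k\<bar> + 1)^2) \<le> 3"
proof -
  define N where "N = nat (max \<bar>A - k\<bar> \<bar>B - k\<bar>)"
  have "(\<Sum>i\<in>{A..B}. 1 / (real_of_int \<bar>i - k\<bar> + 1)^2)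
      = (\<Sum>m\<in>{A-k..B-k}. 1 / (real_of_int \<bar>m\<bar> + 1)^2)"
    by (rule sum.reindex_bij_witness[of _ "\<lambda>m. m + k" "\<lambda>i. i - k"]) auto
  also have "\<dots> \<le> (\<Sum>m\<in>{-int N..int N}. 1 / (real_of_int \<bar>m\<bar> + 1)^2)"
    by (rule sum_mono2) (auto simp: N_def)
  also have "\<dots> \<le> 3"
    using sum_symmetric_inverse_square_le[of N] by (smt (verit) divide_nonneg_nonneg of_nat_0_le_iff)
  finally show ?thesis .
qed

definition cell :: "nat \<Rightarrow> int \<Rightarrow> real set" where
  "cell n k = {real_of_int k / real n .. (real_of_int k + 1) / real n}"

definition cell_mean :: "nat \<Rightarrow> (real \<Rightarrow> real) \<Rightarrow> int \<Rightarrow> real" where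
  "cell_mean n f k = real n * integral (cell n k) f"

lemma mem_cell_iff:
  "n > 0 \<Longrightarrow> x \<in> cell n k \<longleftrightarrow> real_of_int k \<le> real n * x \<and> real n * x \<le> real_of_int k + 1"
  by (auto simp: cell_def field_simps)

lemma integral_cell_bound:
  fixes F :: "real \<Rightarrow> real"
  assumes "n > 0" "continuous_on (cell n k) F" "\<And>x. x \<in> cell n k \<Longrightarrow> \<bar>F x\<bar> \<le> B"
  shows "\<bar>integral (cell n k) F\<bar> \<le> B / real n"
proof -
  have "norm (integral (cell n k) F) \<le> B * ((real_of_int k + 1) / real n - real_of_int k / real n)"
    using assms unfolding cell_def by (intro integral_bound) (auto simp: divide_right_mono)
  then show ?thesis using assms(1) by (simp add: field_simps)
qed

lemma integral_cells:
  fixes F :: "real \<Rightarrow> 'a::banach"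
  assumes n: "n > 0" and "p \<le> q + 1"
    and F: "continuous_on {real_of_int p / real n .. (real_of_int q + 1) / real n} F"
  shows "integral {real_of_int p / real n .. (real_of_int q + 1) / real n} F
           = (\<Sum>k\<in>{p..q}. integral (cell n k) F)"
proof -
  have "p - 1 \<le> q" using assms by simp
  then show ?thesis using F
  proof (induction q rule: int_ge_induct)
    case (step i)
    define x where "x = real_of_int (i + 1) / real n"
    have x: "real_of_int p / real n \<le> x" "x \<le> (real_of_int (i + 1) + 1) / real n"
      using step.hyps n by (auto simp: x_def divide_right_mono)
    have "integral {real_of_int p / real n .. (real_of_int (i + 1) + 1) / real n} F
        = integral {real_of_int p / real n .. x} F + integral (cell n (i + 1)) F"
      using Henstock_Kurzweil_Integration.integral_combine[OF x integrable_continuous_real[OF step.prems]]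
      by (simp add: cell_def x_def)
    also have "integral {real_of_int p / real n .. x} F = (\<Sum>k\<in>{p..i}. integral (cell n k) F)"
    proof -
      have "continuous_on {real_of_int p / real n .. x} F"
        by (rule continuous_on_subset[OF step.prems]) (use x(2) in auto)
      then show ?thesis using step.IH by (simp add: x_def add.commute)
    qed
    also have "{p..i + 1} = insert (i + 1) {p..i}" using step.hyps by auto
    ultimately show ?case by (simp add: add.commute)
  qed simp
qed

lemma integral_primitive_diff:
  fixes h :: "real \<Rightarrow> real"
  assumes h: "continuous_on UNIV h" and h0: "\<And>x. x \<le> a \<Longrightarrow> h x = 0" and xy: "x \<le> y"
  shows "integral {a..y} h - integral {a..x} h = integral {x..y} h"
proof (cases "a \<le> x")
  case True
  then show ?thesis
    using Henstock_Kurzweil_Integration.integral_combine[OF True xy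
        integrable_continuous_real[OF continuous_on_subset[OF h subset_UNIV]]]
    by simp
next
  case False
  define m where "m = min a y"
  have "integral {x..y} h = integral {x..m} h + integral {m..y} h"
    using False xy h by (intro Henstock_Kurzweil_Integration.integral_combine[symmetric])
      (auto simp: m_def integrable_continuous_real continuous_on_subset)
  moreover have "integral {x..m} h = 0"
    using h0 by (subst integral_cong[of _ _ "\<lambda>x. 0"]) (auto simp: m_def)
  moreover have "integral {m..y} h = integral {a..y} h"
    by (cases "a \<le> y") (auto simp: m_def)
  ultimately show ?thesis using False by simp
qed

lemma integral_cell_mult_lipschitz:
  fixes F h :: "real \<Rightarrow> real"
  assumes n: "n > 0" and F: "continuous_on (cell n j) F" "\<And>x. x \<in> cell n j \<Longrightarrow> \<bar>F x\<bar> \<le> M"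
    and h: "L-lipschitz_on UNIV h"
  shows "\<bar>integral (cell n j) (\<lambda>x. F x * h x) - integral (cell n j) F * h (real_of_int k / real n)\<bar>
           \<le> M * L * (real_of_int \<bar>j - k\<bar> + 1) / real n ^ 2"
proof -
  define d where "d = (real_of_int \<bar>j - k\<bar> + 1) / real n"
  have hc: "continuous_on (cell n j) h"
    using lipschitz_on_continuous_on[OF h] continuous_on_subset by blast
  have "integral (cell n j) (\<lambda>x. F x * h x) - integral (cell n j) F * h (real_of_int k / real n)
      = integral (cell n j) (\<lambda>x. F x * (h x - h (real_of_int k / real n)))"
    using F hc by (simp add: right_diff_distrib integral_diff integrable_continuous_real continuous_intros
        cell_def)
  also have "\<bar>\<dots>\<bar> \<le> M * (L * d) / real n"
  proof (rule integral_cell_bound[OF n])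
    fix x assume x: "x \<in> cell n j"
    then have "\<bar>real n * x - real_of_int k\<bar> \<le> real_of_int \<bar>j - k\<bar> + 1"
      using n by (auto simp: mem_cell_iff)
    then have "\<bar>x - real_of_int k / real n\<bar> \<le> d"
      using n by (simp add: d_def field_simps abs_div_pos[symmetric] abs_mult)
    then have "\<bar>h x - h (real_of_int k / real n)\<bar> \<le> L * d"
      using lipschitz_on_normD[OF h, of x "real_of_int k / real n"] lipschitz_on_nonneg[OF h]
      by (smt (verit) UNIV_I mult_left_mono real_norm_def)
    then show "\<bar>F x * (h x - h (real_of_int k / real n))\<bar> \<le> M * (L * d)"
      using F(2)[OF x] by (simp add: abs_mult mult_mono')
  qed (use F hc in \<open>intro continuous_intros\<close>)
  finally show ?thesis by (simp add: d_def power2_eq_square)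
qed

lemma integral_cell_lipschitz:
  assumes "n > 0" "L-lipschitz_on UNIV h"
  shows "\<bar>integral (cell n j) h - h (real_of_int k / real n) / real n\<bar>
           \<le> L * (real_of_int \<bar>j - k\<bar> + 1) / real n ^ 2"
proof -
  have "integral (cell n j) (\<lambda>x. 1) = 1 / real n"
    using assms(1) by (simp add: cell_def field_simps)
  then show ?thesis
    using integral_cell_mult_lipschitz[OF assms(1) _ _ assms(2), of j "\<lambda>x. 1" 1 k] by simp
qed

lemma Kset_eq: "Kset a b n = {\<lceil>real n * a\<rceil>..\<lfloor>real n * b\<rfloor> - 1}"
  by (auto simp: Kset_def)

lemma finite_Kset [simp]: "finite (Kset a b n)"
  by (simp add: Kset_eq)

lemma of_int_ceiling_less_add_one: "real_of_int \<lceil>x\<rceil> < x + 1"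
  by linarith

lemma of_int_floor_gt_diff_one: "x - 1 < real_of_int \<lfloor>x\<rfloor>"
  by linarith

lemma Kset_nonempty:
  assumes "2 \<le> real n * (b - a)"
  shows "\<lceil>real n * a\<rceil> \<le> \<lfloor>real n * b\<rfloor> - 1"
proof -
  have "real_of_int \<lceil>real n * a\<rceil> < real_of_int \<lfloor>real n * b\<rfloor>"
    using of_int_ceiling_less_add_one[of "real n * a"] of_int_floor_gt_diff_one[of "real n * b"] assms
    unfolding right_diff_distrib by linarith
  then show ?thesis by simp
qed

lemma card_Kset_le:
  assumes "a \<le> b"
  shows "real (card (Kset a b n)) \<le> real n * (b - a)"
proof (cases "\<lceil>real n * a\<rceil> \<le> \<lfloor>real n * b\<rfloor> - 1")
  case True
  then have "real (card (Kset a b n)) = real_of_int \<lfloor>real n * b\<rfloor> - real_of_int \<lceil>real n * a\<rceil>"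
    by (simp add: Kset_eq)
  then show ?thesis
    using le_of_int_ceiling[of "real n * a"] of_int_floor_le[of "real n * b"]
    unfolding right_diff_distrib by linarith
qed (use assms in \<open>simp add: Kset_eq\<close>)

lemma Kset_cell_bounds:
  assumes "k \<in> Kset a b n"
  shows "real n * a \<le> real_of_int k" "real_of_int k + 1 \<le> real n * b"
proof -
  have "\<lceil>real n * a\<rceil> \<le> k" "k + 1 \<le> \<lfloor>real n * b\<rfloor>"
    using assms by (auto simp: Kset_def)
  then show "real n * a \<le> real_of_int k" "real_of_int k + 1 \<le> real n * b"
    unfolding ceiling_le_iff le_floor_iff by simp_all
qed

lemma cell_subset_Kset:
  assumes n: "n > 0" and k: "k \<in> Kset a b n"
  shows "cell n k \<subseteq> {a..b}"
proof
  fix x assume "x \<in> cell n k"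
  then have "real_of_int k \<le> real n * x" "real n * x \<le> real_of_int k + 1"
    using n by (auto simp: mem_cell_iff)
  then have "real n * a \<le> real n * x" "real n * x \<le> real n * b"
    using Kset_cell_bounds[OF k] by linarith+
  then show "x \<in> {a..b}" using n by (simp add: mult_le_cancel_left_pos)
qed

lemma continuous_on_cell_Kset:
  assumes "continuous_on {a..b} f" "n > 0" "k \<in> Kset a b n"
  shows "continuous_on (cell n k) f"
  using assms(1) by (rule continuous_on_subset) (rule cell_subset_Kset[OF assms(2,3)])

lemma cell_mean_abs_le:
  assumes "n > 0" "k \<in> Kset a b n" "continuous_on {a..b} f" "\<And>x. x \<in> {a..b} \<Longrightarrow> \<bar>f x\<bar> \<le> M"
  shows "\<bar>cell_mean n f k\<bar> \<le> M"
proof -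
  have "\<bar>integral (cell n k) f\<bar> \<le> M / real n"
    using assms(4) cell_subset_Kset[OF assms(1,2)]
    by (intro integral_cell_bound[OF assms(1)] continuous_on_cell_Kset[OF assms(3,1,2)]) blast
  then show ?thesis using assms(1) by (simp add: cell_mean_def abs_mult field_simps)
qed

lemma cell_mean_const:
  assumes "n > 0" "k \<in> Kset a b n" "\<And>x. x \<in> {a..b} \<Longrightarrow> f x = c"
  shows "cell_mean n f k = c"
proof -
  have "integral (cell n k) f = integral (cell n k) (\<lambda>x. c)"
    using assms(3) cell_subset_Kset[OF assms(1,2)] by (intro integral_cong) blast
  then show ?thesis using assms(1) by (simp add: cell_mean_def cell_def field_simps)
qed

lemma integral_eq_sum_cells_Kset:
  fixes F :: "real \<Rightarrow> real"
  assumes n: "n > 0" and ab: "2 \<le> real n * (b - a)" and n\<delta>: "1 \<le> real n * \<delta>"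
    and F: "continuous_on {a..b} F" and F0: "\<And>x. x \<notin> {a + \<delta><..<b - \<delta>} \<Longrightarrow> F x = 0"
  shows "integral {a..b} F = (\<Sum>k\<in>Kset a b n. integral (cell n k) F)"
proof -
  define p where "p = \<lceil>real n * a\<rceil>"
  define q where "q = \<lfloor>real n * b\<rfloor> - 1"
  define J where "J = {real_of_int p / real n .. (real_of_int q + 1) / real n}"
  have J: "J \<subseteq> {a..b}"
    using le_of_int_ceiling[of "real n * a"] of_int_floor_le[of "real n * b"] n
    by (auto simp: J_def p_def q_def field_simps)
  have outside_J: "F x = 0" if "x \<notin> J" for x
  proof -
    have "real n * x \<le> real n * (a + \<delta>) \<or> real n * (b - \<delta>) \<le> real n * x"
      using that n n\<delta> of_int_ceiling_less_add_one[of "real n * a"] of_int_floor_gt_diff_one[of "real n * b"]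
      by (auto simp: J_def p_def q_def field_simps)
    then show ?thesis using n by (auto intro: F0)
  qed
  have FJ: "continuous_on J F" using J F by (rule continuous_on_subset[rotated])
  have "integral {a..b} F = integral J F"
    using FJ unfolding J_def
    by (intro integral_unique has_integral_on_superset[OF _ outside_J J, unfolded J_def]
        integrable_integral integrable_continuous_real)
  also have "\<dots> = (\<Sum>k\<in>Kset a b n. integral (cell n k) F)"
    unfolding J_def Kset_eq p_def[symmetric] q_def[symmetric]
    by (rule integral_cells[OF n _ FJ[unfolded J_def]]) (use Kset_nonempty[OF ab] in \<open>simp add: p_def q_def\<close>)
  finally show ?thesis .
qed

lemma riemann_sum_cell_means_approx:
  fixes f h :: "real \<Rightarrow> real"
  assumes n: "n > 0" and ab: "2 \<le> real n * (b - a)" and n\<delta>: "1 \<le> real n * \<delta>"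
    and f: "continuous_on {a..b} f" and M: "\<And>x. x \<in> {a..b} \<Longrightarrow> \<bar>f x\<bar> \<le> M"
    and h: "L-lipschitz_on UNIV h" and h0: "\<And>x. x \<notin> {a + \<delta><..<b - \<delta>} \<Longrightarrow> h x = 0"
  shows "\<bar>integral {a..b} (\<lambda>x. f x * h x)
            - (\<Sum>k\<in>Kset a b n. cell_mean n f k * h (real_of_int k / real n)) / real n\<bar>
           \<le> real (card (Kset a b n)) * (M * L / real n ^ 2)"
proof -
  have "integral {a..b} (\<lambda>x. f x * h x) = (\<Sum>k\<in>Kset a b n. integral (cell n k) (\<lambda>x. f x * h x))"
    using lipschitz_on_continuous_on[OF h]
    by (intro integral_eq_sum_cells_Kset[OF n ab n\<delta>] continuous_intros f) (auto intro: continuous_on_subset h0)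
  moreover have "(\<Sum>k\<in>Kset a b n. cell_mean n f k * h (real_of_int k / real n)) / real n
      = (\<Sum>k\<in>Kset a b n. integral (cell n k) f * h (real_of_int k / real n))"
    using n unfolding sum_divide_distrib cell_mean_def by (intro sum.cong) auto
  ultimately have "integral {a..b} (\<lambda>x. f x * h x)
      - (\<Sum>k\<in>Kset a b n. cell_mean n f k * h (real_of_int k / real n)) / real n
      = (\<Sum>k\<in>Kset a b n. integral (cell n k) (\<lambda>x. f x * h x)
            - integral (cell n k) f * h (real_of_int k / real n))"
    by (simp add: sum_subtractf)
  also have "\<bar>\<dots>\<bar> \<le> real (card (Kset a b n)) * (M * L / real n ^ 2)"
  proof (rule order_trans[OF sum_abs sum_bounded_above])
    fix k assume k: "k \<in> Kset a b n"
    have "\<And>x. x \<in> cell n k \<Longrightarrow> \<bar>f x\<bar> \<le> M" using M cell_subset_Kset[OF n k] by blast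
    from integral_cell_mult_lipschitz[OF n continuous_on_cell_Kset[OF f n k] this h, of k]
    show "\<bar>integral (cell n k) (\<lambda>x. f x * h x) - integral (cell n k) f * h (real_of_int k / real n)\<bar>
        \<le> M * L / real n ^ 2" by simp
  qed
  finally show ?thesis .
qed

definition tent :: "real \<Rightarrow> real \<Rightarrow> real \<Rightarrow> real" where
  "tent c e x = max 0 (e - \<bar>x - c\<bar>)"

lemma tent_nonneg: "0 \<le> tent c e x"
  by (simp add: tent_def)

lemma tent_eq_0: "e \<le> \<bar>x - c\<bar> \<Longrightarrow> tent c e x = 0"
  by (simp add: tent_def)

lemma lipschitz_on_tent: "1-lipschitz_on U (tent c e)"
  by (rule lipschitz_onI) (auto simp: tent_def dist_real_def max_def abs_if)

lemma continuous_on_tent [continuous_intros]: "continuous_on U (tent c e)"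
  unfolding tent_def by (intro continuous_intros)

lemma tent_has_integral:
  assumes e: "e > 0" and "a \<le> c - e" "c + e \<le> b"
  shows "(tent c e has_integral e^2) {a..b}"
proof -
  have outer: "(tent c e has_integral 0) {x..y}" if "y \<le> c - e \<or> c + e \<le> x" for x y
    using has_integral_0[of "{x..y}"] by (rule has_integral_eq[rotated]) (use that in \<open>auto simp: tent_eq_0\<close>)
  have left: "(tent c e has_integral e^2/2) {c-e..c}"
  proof -
    have "((\<lambda>x. x - c + e) has_integral ((c - c + e)^2/2 - (c - e - c + e)^2/2)) {c-e..c}"
      using e by (intro fundamental_theorem_of_calculus)
        (auto intro!: derivative_eq_intros simp: has_real_derivative_iff_has_vector_derivative[symmetric])
    then have "((\<lambda>x. x - c + e) has_integral e^2/2) {c-e..c}" by simp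
    then show ?thesis by (rule has_integral_eq[rotated]) (auto simp: tent_def)
  qed
  have right: "(tent c e has_integral e^2/2) {c..c+e}"
  proof -
    have "((\<lambda>x. e - (x - c)) has_integral
        (e * (c + e - c) - (c + e - c)^2/2) - (e * (c - c) - (c - c)^2/2)) {c..c+e}"
      using e by (intro fundamental_theorem_of_calculus)
        (auto intro!: derivative_eq_intros simp: has_real_derivative_iff_has_vector_derivative[symmetric]
          field_simps)
    then have "((\<lambda>x. e - (x - c)) has_integral e^2/2) {c..c+e}" by (simp add: power2_eq_square)
    then show ?thesis by (rule has_integral_eq[rotated]) (auto simp: tent_def)
  qed
  have "(tent c e has_integral e^2/2 + e^2/2) {c-e..c+e}"
    using e by (intro has_integral_combine[OF _ _ left right]) auto
  then have "(tent c e has_integral 0 + (e^2/2 + e^2/2)) {a..c+e}"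
    using assms by (intro has_integral_combine[OF _ _ outer]) auto
  then have main: "(tent c e has_integral e^2) {a..c+e}" by simp
  have "(tent c e has_integral e^2 + 0) {a..b}"
    by (rule has_integral_combine[OF _ _ main outer]) (use assms e in auto)
  then show ?thesis by simp
qed

lemma integral_mult_tent_approx:
  fixes f :: "real \<Rightarrow> real"
  assumes e: "e > 0" "a \<le> c - e" "c + e \<le> b" and f: "continuous_on {a..b} f"
    and near: "\<And>x. x \<in> {a..b} \<Longrightarrow> \<bar>x - c\<bar> < e \<Longrightarrow> \<bar>f x - f c\<bar> \<le> \<eta>"
  shows "\<bar>integral {a..b} (\<lambda>x. f x * tent c e x) - f c * e^2\<bar> \<le> \<eta> * e^2"
proof -
  have T: "(tent c e has_integral e^2) {a..b}" by (rule tent_has_integral[OF e])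
  have "integral {a..b} (\<lambda>x. (f x - f c) * tent c e x)
      = integral {a..b} (\<lambda>x. f x * tent c e x) - integral {a..b} (\<lambda>x. f c * tent c e x)"
    unfolding left_diff_distrib
    by (intro integral_diff integrable_continuous_real continuous_intros f)
  also have "integral {a..b} (\<lambda>x. f c * tent c e x) = f c * e^2"
    using T by (simp add: integral_unique)
  finally have "integral {a..b} (\<lambda>x. f x * tent c e x) - f c * e^2
      = integral {a..b} (\<lambda>x. (f x - f c) * tent c e x)" by simp
  also have "\<bar>\<dots>\<bar> \<le> integral {a..b} (\<lambda>x. \<eta> * tent c e x)"
  proof -
    have "(\<lambda>x. (f x - f c) * tent c e x) integrable_on {a..b}"
      by (intro integrable_continuous_real continuous_intros f)
    moreover have "(\<lambda>x. \<eta> * tent c e x) integrable_on {a..b}"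
      by (intro integrable_continuous_real continuous_intros)
    moreover have "\<bar>(f x - f c) * tent c e x\<bar> \<le> \<eta> * tent c e x" if "x \<in> {a..b}" for x
      using near[OF that] tent_nonneg[of c e x] tent_eq_0[of e x c]
      by (cases "\<bar>x - c\<bar> < e") (auto simp: abs_mult mult_right_mono)
    ultimately have "norm (integral {a..b} (\<lambda>x. (f x - f c) * tent c e x))
        \<le> integral {a..b} (\<lambda>x. \<eta> * tent c e x)"
      by (intro integral_norm_bound_integral) auto
    then show ?thesis by simp
  qed
  also have "\<dots> = \<eta> * e^2" using T by (simp add: integral_unique)
  finally show ?thesis .
qed

section \<open>Summation by parts against central differences\<close>

lemma sum_shift_support_int:
  fixes G F :: "int \<Rightarrow> real"
  assumes "\<And>j. j \<notin> {p..q} \<Longrightarrow> G j = 0" "{p + d..q + d} \<subseteq> W" "finite W"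
  shows "(\<Sum>j\<in>{p..q}. G j * F (j + d)) = (\<Sum>i\<in>W. G (i - d) * F i)"
proof -
  have "(\<Sum>j\<in>{p..q}. G j * F (j + d)) = (\<Sum>i\<in>{p + d..q + d}. G (i - d) * F i)"
    by (rule sum.reindex_bij_witness[of _ "\<lambda>i. i - d" "\<lambda>j. j + d"]) auto
  also have "\<dots> = (\<Sum>i\<in>W. G (i - d) * F i)"
    using assms by (intro sum.mono_neutral_left) auto
  finally show ?thesis .
qed

lemma sum_antisymmetric_window:
  fixes T :: "int \<Rightarrow> real"
  assumes "\<And>m. T (- 1 - m) = - T m"
  shows "(\<Sum>i\<in>{k - 1 - N..k + N}. T (i - k)) = 0"
proof -
  have "(\<Sum>i\<in>{k - 1 - N..k + N}. T (i - k)) = (\<Sum>i\<in>{k - 1 - N..k + N}. T (- 1 - (i - k)))"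
    by (rule sum.reindex_bij_witness[of _ "\<lambda>i. 2 * k - 1 - i" "\<lambda>i. 2 * k - 1 - i"])
      (auto simp: algebra_simps)
  also have "\<dots> = - (\<Sum>i\<in>{k - 1 - N..k + N}. T (i - k))"
    by (simp add: assms sum_negf)
  finally show ?thesis by simp
qed

text \<open>Summation by parts: the central differences of \<open>S\<close> are moved onto \<open>G\<close>; the Heaviside
  part of \<open>S\<close> telescopes, and any constant \<open>c\<close> may be added to the differences of \<open>G\<close>
  because the antisymmetric \<open>T\<close> sums to zero over a window centred at \<open>k - 1/2\<close>.\<close>
lemma sum_central_difference_eq:
  fixes G S T :: "int \<Rightarrow> real"
  assumes G0: "\<And>i. i \<notin> {p<..<q} \<Longrightarrow> G i = 0" and k: "k \<in> {p..q}" and N: "q - p + 1 \<le> N"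
    and S: "\<And>m. S m = T m + (if 0 \<le> m then 1 else 0)" and T: "\<And>m. T (- 1 - m) = - T m"
  shows "(\<Sum>j\<in>{p..q}. G j * (S (j - k + 1) - S (j - k - 1))) - 2 * G k
           = (\<Sum>i\<in>{k - 1 - N..k + N}. (G (i - 1) - G (i + 1) + c) * T (i - k)) + G (k - 1) - G k"
proof -
  define W where "W = {k - 1 - N..k + N}"
  have G0': "G j = 0" if "j \<notin> {p..q}" for j using G0 that by auto
  have "(\<Sum>j\<in>{p..q}. G j * S (j - k + 1)) = (\<Sum>i\<in>W. G (i - 1) * S (i - k))"
    using sum_shift_support_int[OF G0', where d = 1 and W = W and F = "\<lambda>i. S (i - k)"] k N
    by (simp add: W_def algebra_simps)
  moreover have "(\<Sum>j\<in>{p..q}. G j * S (j - k - 1)) = (\<Sum>i\<in>W. G (i + 1) * S (i - k))"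
    using sum_shift_support_int[OF G0', where d = "- 1" and W = W and F = "\<lambda>i. S (i - k)"] k N
    by (simp add: W_def algebra_simps)
  ultimately have "(\<Sum>j\<in>{p..q}. G j * (S (j - k + 1) - S (j - k - 1)))
      = (\<Sum>i\<in>W. (G (i - 1) - G (i + 1)) * S (i - k))"
    by (simp add: right_diff_distrib sum_subtractf left_diff_distrib)
  also have "\<dots> = (\<Sum>i\<in>W. (G (i - 1) - G (i + 1)) * T (i - k))
      + (\<Sum>i\<in>W. if k \<le> i then G (i - 1) - G (i + 1) else 0)"
    unfolding sum.distrib[symmetric] by (rule sum.cong) (auto simp: S algebra_simps)
  also have "(\<Sum>i\<in>W. if k \<le> i then G (i - 1) - G (i + 1) else 0) = (\<Sum>i\<in>{k..k + N}. G (i - 1) - G (i + 1))"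
    by (subst sum.inter_filter[symmetric]) (auto simp: W_def intro!: sum.cong)
  also have "\<dots> = G (k - 1) + G k"
    using sum_int_central_telescope[of k "k + N" G] G0' k N by simp
  also have "(\<Sum>i\<in>W. (G (i - 1) - G (i + 1)) * T (i - k))
      = (\<Sum>i\<in>W. (G (i - 1) - G (i + 1) + c) * T (i - k))"
    using sum_antisymmetric_window[where T = T and k = k and N = N, OF T]
    by (simp add: W_def distrib_right sum.distrib sum_distrib_left[symmetric])
  finally show ?thesis by (simp add: W_def)
qed

lemma abs_central_difference_approx:
  fixes G :: "int \<Rightarrow> real"
  assumes n: "n > 0" and h: "L-lipschitz_on UNIV h"
    and G_diff: "\<And>i. G (i + 1) - G i = integral (cell n i) h"
  shows "\<bar>G (i - 1) - G (i + 1) + 2 * h (real_of_int k / real n) / real n\<bar>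
           \<le> 3 * L * (real_of_int \<bar>i - k\<bar> + 1) / real n ^ 2"
proof -
  define r where "r i = real_of_int \<bar>i - k\<bar> + 1" for i
  have step: "\<bar>G (i + 1) - G i - h (real_of_int k / real n) / real n\<bar> \<le> L * r i / real n ^ 2" for i
    using integral_cell_lipschitz[OF n h, of i k] G_diff[of i] by (simp add: r_def)
  have "r (i - 1) \<le> 2 * r i" unfolding r_def of_int_abs by (simp add: abs_if)
  from mult_left_mono[OF this lipschitz_on_nonneg[OF h]] have "L * r (i - 1) / real n ^ 2 \<le> 2 * L * r i / real n ^ 2"
    by (simp add: divide_right_mono)
  then show ?thesis using step[of i] step[of "i - 1"] by (simp add: r_def abs_le_iff)
qed

lemma sum_central_difference_approx:
  fixes G S T :: "int \<Rightarrow> real" and h :: "real \<Rightarrow> real"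
  assumes n: "n > 0" and h: "L-lipschitz_on UNIV h"
    and G_diff: "\<And>i. G (i + 1) - G i = integral (cell n i) h"
    and G0: "\<And>i. i \<notin> {p<..<q} \<Longrightarrow> G i = 0" and k: "k \<in> {p..q}"
    and S: "\<And>m. S m = T m + (if 0 \<le> m then 1 else 0)" and T: "\<And>m. T (- 1 - m) = - T m"
    and T_decay: "\<And>m. \<bar>T m\<bar> \<le> C / (real_of_int \<bar>m\<bar> + 1)^3"
  shows "\<bar>(\<Sum>j\<in>{p..q}. G j * (S (j - k + 1) - S (j - k - 1))) - 2 * G k + h (real_of_int k / real n) / real n\<bar>
           \<le> L * (2 + 9 * C) / real n ^ 2"
proof -
  define W where "W = {k - 1 - (q - p + 1)..k + (q - p + 1)}"
  define c where "c = 2 * h (real_of_int k / real n) / real n"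
  define r where "r i = real_of_int \<bar>i - k\<bar> + 1" for i
  have L: "0 \<le> L" using lipschitz_on_nonneg[OF h] .
  have C: "0 \<le> C" using T_decay[of 0] abs_ge_zero[of "T 0"] by simp
  have "\<bar>(G (i - 1) - G (i + 1) + c) * T (i - k)\<bar> \<le> 3 * L * C / real n ^ 2 * (1 / r i ^ 2)" for i
  proof -
    have "\<bar>(G (i - 1) - G (i + 1) + c) * T (i - k)\<bar> \<le> (3 * L * r i / real n ^ 2) * (C / r i ^ 3)"
      unfolding abs_mult c_def r_def using abs_central_difference_approx[OF n h G_diff, of i k] T_decay[of "i - k"] L
      by (intro mult_mono) auto
    moreover have "r i \<noteq> 0" by (simp add: r_def)
    ultimately show ?thesis by (simp add: power2_eq_square power3_eq_cube)
  qed
  then have "\<bar>\<Sum>i\<in>W. (G (i - 1) - G (i + 1) + c) * T (i - k)\<bar>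
      \<le> 3 * L * C / real n ^ 2 * (\<Sum>i\<in>W. 1 / r i ^ 2)"
    unfolding sum_distrib_left by (intro order_trans[OF sum_abs sum_mono])
  also have "\<dots> \<le> 3 * L * C / real n ^ 2 * 3"
    unfolding W_def r_def using L C by (intro mult_left_mono sum_inverse_square_le_3) auto
  moreover have "\<bar>G (k - 1) - G k + c / 2\<bar> \<le> L * 2 / real n ^ 2"
    using integral_cell_lipschitz[OF n h, of "k - 1" k] G_diff[of "k - 1"]
    by (auto simp: c_def abs_le_iff)
  moreover have "(\<Sum>j\<in>{p..q}. G j * (S (j - k + 1) - S (j - k - 1))) - 2 * G k
      = (\<Sum>i\<in>W. (G (i - 1) - G (i + 1) + c) * T (i - k)) + G (k - 1) - G k"
    unfolding W_def by (rule sum_central_difference_eq[where G = G]) (use G0 k S T in auto)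
  moreover have "L * (2 + 9 * C) / real n ^ 2 = 3 * L * C / real n ^ 2 * 3 + L * 2 / real n ^ 2"
    using n by (simp add: field_simps)
  ultimately show ?thesis
    by (simp add: c_def)
qed

locale symmetric_sigmoid =
  fixes \<sigma> :: "real \<Rightarrow> real"
  assumes sigmoidal: "sigmoidal \<sigma>" and odd_shift: "Sigma1 \<sigma>" and smooth_concave: "Sigma2 \<sigma>"
begin

lemma sigma_mono: "x \<le> y \<Longrightarrow> \<sigma> x \<le> \<sigma> y"
  using sigmoidal unfolding sigmoidal_def mono_def by blast

lemma sigma_at_top: "(\<sigma> \<longlongrightarrow> 1) at_top" and sigma_at_bot: "(\<sigma> \<longlongrightarrow> 0) at_bot"
  using sigmoidal unfolding sigmoidal_def by auto

lemma sigma_le_1: "\<sigma> x \<le> 1"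
  by (rule tendsto_lowerbound[OF sigma_at_top])
    (auto intro: eventually_at_top_linorderI[of x] sigma_mono)

lemma sigma_nonneg: "0 \<le> \<sigma> x"
  by (rule tendsto_upperbound[OF sigma_at_bot])
    (auto intro: eventually_at_bot_linorderI[of x] sigma_mono)

lemma sigma_minus: "\<sigma> (- x) = 1 - \<sigma> x"
proof -
  have "\<sigma> (- x) - 1/2 = - (\<sigma> x - 1/2)" using odd_shift unfolding Sigma1_def by blast
  then show ?thesis by linarith
qed

lemma sigma_0: "\<sigma> 0 = 1/2"
  using sigma_minus[of 0] by simp

lemma continuous_on_sigma [continuous_intros]:
  "continuous_on S g \<Longrightarrow> continuous_on S (\<lambda>x. \<sigma> (g x))"
proof -
  obtain \<sigma>' where "\<And>x. (\<sigma> has_real_derivative \<sigma>' x) (at x)"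
    using smooth_concave unfolding Sigma2_def by blast
  then have "continuous_on UNIV \<sigma>"
    by (blast intro: continuous_at_imp_continuous_on DERIV_isCont)
  then show "continuous_on S g \<Longrightarrow> continuous_on S (\<lambda>x. \<sigma> (g x))"
    using continuous_on_compose2 by blast
qed

text \<open>A concave function on \<open>[0, \<infinity>)\<close> that is constant on some \<open>[s, t]\<close> can never
  increase after \<open>t\<close>; since \<open>\<sigma>\<close> tends to 1, it is strictly increasing on \<open>[0, \<infinity>)\<close> until
  it reaches 1.\<close>
lemma sigma_strict_mono_nonneg:
  assumes "0 \<le> s" "s < t" "\<sigma> s < 1"
  shows "\<sigma> s < \<sigma> t"
proof (rule ccontr)
  assume "\<not> \<sigma> s < \<sigma> t"
  with sigma_mono[of s t] assms have flat: "\<sigma> t = \<sigma> s" by linarith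
  have concave: "concave_on {0..} \<sigma>" using smooth_concave unfolding Sigma2_def by blast
  have "\<sigma> y \<le> \<sigma> s" if y: "y > t" for y
  proof -
    define l where "l = (t - s) / (y - s)"
    have l: "0 < l" "l < 1" using assms y by (auto simp: l_def field_simps)
    have "l * (y - s) = t - s" using assms y by (simp add: l_def)
    then have "(1 - l) * s + l * y = t" by (simp add: algebra_simps)
    then have "(1 - l) * \<sigma> s + l * \<sigma> y \<le> \<sigma> t"
      using concave_onD[OF concave, of l s y] l assms y by auto
    with flat l show ?thesis by (simp add: algebra_simps)
  qed
  then have "1 \<le> \<sigma> s"
    by (intro tendsto_upperbound[OF sigma_at_top]) (auto intro: eventually_at_top_linorderI[of "t + 1"])
  with assms show False by simp
qed

lemma sigma_strict_mono_below_1: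
  assumes "\<sigma> 1 < 1" "t < s" "0 < s" "t < 1"
  shows "\<sigma> t < \<sigma> s"
proof (cases "t < 0")
  case True
  have "\<sigma> t < \<sigma> 0"
    using sigma_strict_mono_nonneg[of 0 "- t"] True by (simp add: sigma_0 sigma_minus)
  then show ?thesis using sigma_mono[of 0 s] assms by simp
next
  case False
  then show ?thesis
    using sigma_strict_mono_nonneg[of t s] sigma_mono[of t 1] assms by simp
qed

lemma phi_sigma_nonneg: "0 \<le> phi_sigma \<sigma> x"
  unfolding phi_sigma_def using sigma_mono[of "x - 1" "x + 1"] by simp

lemma continuous_on_phi_sigma [continuous_intros]:
  "continuous_on S g \<Longrightarrow> continuous_on S (\<lambda>x. phi_sigma \<sigma> (g x))"
  unfolding phi_sigma_def by (intro continuous_intros) auto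

lemma sum_phi_sigma:
  assumes "p \<le> q + 1"
  shows "2 * (\<Sum>k\<in>{p..q}. phi_sigma \<sigma> (u - real_of_int k))
           = \<sigma> (u - p + 1) + \<sigma> (u - p) - \<sigma> (u - q) - \<sigma> (u - q - 1)"
proof -
  have "2 * (\<Sum>k\<in>{p..q}. phi_sigma \<sigma> (u - real_of_int k))
      = (\<Sum>k\<in>{p..q}. \<sigma> (u - real_of_int (k - 1)) - \<sigma> (u - real_of_int (k + 1)))"
    unfolding sum_distrib_left phi_sigma_def by (intro sum.cong) (auto simp: field_simps)
  also have "\<dots> = \<sigma> (u - p + 1) + \<sigma> (u - p) - \<sigma> (u - q) - \<sigma> (u - q - 1)"
    using sum_int_central_telescope[OF assms, of "\<lambda>k. \<sigma> (u - real_of_int k)"]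
    by (simp add: algebra_simps)
  finally show ?thesis .
qed

lemma sigma_cubic_decay:
  assumes "Sigma3 \<sigma> \<alpha>" "2 \<le> \<alpha>"
  obtains C where "C > 0" "\<And>t. 0 \<le> t \<Longrightarrow> \<sigma> (- t) \<le> C / (t + 1)^3"
proof -
  have "\<sigma> \<in> O[at_bot](\<lambda>x. \<bar>x\<bar> powr (-1 - \<alpha>))"
    using assms(1) by (simp add: Sigma3_def)
  then obtain c where c: "c > 0" "\<forall>\<^sub>F x in at_bot. norm (\<sigma> x) \<le> c * norm (\<bar>x\<bar> powr (-1 - \<alpha>))"
    by (elim landau_o.bigE)
  then obtain X where X: "\<And>x. x \<le> X \<Longrightarrow> \<sigma> x \<le> c * \<bar>x\<bar> powr (-1 - \<alpha>)"
    unfolding eventually_at_bot_linorder by fastforce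
  define T where "T = max 1 (- X)"
  define C where "C = max (8 * c) ((T + 1)^3)"
  have "\<sigma> (- t) \<le> C / (t + 1)^3" if t: "0 \<le> t" for t
  proof (cases "T \<le> t")
    case True
    then have t1: "1 \<le> t" and "- t \<le> X" by (auto simp: T_def)
    then have "\<sigma> (- t) \<le> c * t powr (-1 - \<alpha>)" using X by fastforce
    also have "\<dots> \<le> c * t powr (- 3)"
      using t1 assms c by (intro mult_left_mono powr_mono) auto
    also have "\<dots> = c / t^3"
      using t1 by (simp add: powr_minus powr_realpow divide_inverse)
    also have "\<dots> \<le> 8 * c / (t + 1)^3"
    proof -
      have "(t + 1)^3 \<le> (2 * t)^3" using t1 by (intro power_mono) auto
      then show ?thesis using c t1 by (simp add: field_simps)
    qed
    also have "\<dots> \<le> C / (t + 1)^3" using t by (intro divide_right_mono) (auto simp: C_def)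
    finally show ?thesis .
  next
    case False
    have "(t + 1)^3 \<le> (T + 1)^3" using False t by (intro power_mono) auto
    then have "1 \<le> (T + 1)^3 / (t + 1)^3" using t by simp
    then have "\<sigma> (- t) \<le> (T + 1)^3 / (t + 1)^3" using sigma_le_1[of "- t"] by linarith
    also have "\<dots> \<le> C / (t + 1)^3" using t by (intro divide_right_mono) (auto simp: C_def)
    finally show ?thesis .
  qed
  moreover have "C > 0" using c by (simp add: C_def)
  ultimately show ?thesis using that by blast
qed

lemma tendsto_mult_sigma_linear:
  assumes "Sigma3 \<sigma> \<alpha>" "2 \<le> \<alpha>" "\<delta> > 0"
  shows "(\<lambda>n. real n * \<sigma> (c - real n * \<delta>)) \<longlonglongrightarrow> 0"
proof -
  obtain C where C: "C > 0" "\<And>t. 0 \<le> t \<Longrightarrow> \<sigma> (- t) \<le> C / (t + 1)^3"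
    using sigma_cubic_decay[OF assms(1,2)] by blast
  have lim: "(\<lambda>n. real n * (C / (real n * \<delta> - c + 1)^3)) \<longlonglongrightarrow> 0"
    using assms(3) by real_asymp
  have upper: "\<forall>\<^sub>F n in sequentially.
      real n * \<sigma> (c - real n * \<delta>) \<le> real n * (C / (real n * \<delta> - c + 1)^3)"
  proof -
    have "\<forall>\<^sub>F n in sequentially. c \<le> real n * \<delta>"
      using assms(3) by real_asymp
    then show ?thesis
    proof eventually_elim
      case (elim n)
      then have "\<sigma> (c - real n * \<delta>) \<le> C / (real n * \<delta> - c + 1)^3"
        using C(2)[of "real n * \<delta> - c"] by simp
      then show ?case by (intro mult_left_mono) auto
    qed
  qed
  have lower: "\<forall>\<^sub>F n in sequentially. 0 \<le> real n * \<sigma> (c - real n * \<delta>)"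
    by (simp add: sigma_nonneg)
  show ?thesis
    by (rule tendsto_sandwich[OF lower upper tendsto_const lim])
qed

definition sigma_avg :: "real \<Rightarrow> real" where
  "sigma_avg m = integral {m..m + 1} \<sigma>"

definition heaviside_defect :: "int \<Rightarrow> real" where
  "heaviside_defect m = sigma_avg (real_of_int m) - (if 0 \<le> m then 1 else 0)"

lemma sigma_has_integral: "(\<sigma> has_integral sigma_avg m) {m..m + 1}"
  unfolding sigma_avg_def by (intro integrable_integral integrable_continuous_real continuous_intros)

lemma has_integral_sigma_affine:
  assumes "r > 0"
  shows "((\<lambda>x. \<sigma> (r * x + c)) has_integral sigma_avg m / r) {(m - c) / r..(m + 1 - c) / r}"
  using has_integral_affinity'[OF sigma_has_integral[of m, unfolded cbox_interval[symmetric]] assms, of c]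
  by (simp add: divide_inverse mult.commute)

lemma sigma_avg_minus: "sigma_avg (- 1 - m) = 1 - sigma_avg m"
proof -
  have "(\<sigma> has_integral sigma_avg (- 1 - m)) {- 1 - m..- m}"
    using sigma_has_integral[of "- 1 - m"] by simp
  then have "((\<lambda>x. \<sigma> (- x)) has_integral sigma_avg (- 1 - m)) {m..m + 1}"
    using has_integral_reflect_real[where a = "- 1 - m" and b = "- m" and f = \<sigma>] by (simp add: add.commute)
  then have "((\<lambda>x. 1 - \<sigma> x) has_integral sigma_avg (- 1 - m)) {m..m + 1}"
    by (simp add: sigma_minus)
  moreover have "((\<lambda>x. 1 - \<sigma> x) has_integral 1 - sigma_avg m) {m..m + 1}"
    using has_integral_diff[OF has_integral_const_real[of 1 m "m + 1"] sigma_has_integral[of m]] by simp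
  ultimately show ?thesis by (rule has_integral_unique)
qed

lemma heaviside_defect_minus: "heaviside_defect (- 1 - m) = - heaviside_defect m"
  using sigma_avg_minus[of "real_of_int m"] by (simp add: heaviside_defect_def)

lemma abs_heaviside_defect_le:
  assumes "0 \<le> m"
  shows "\<bar>heaviside_defect m\<bar> \<le> \<sigma> (- real_of_int m)"
proof -
  have "integral {real_of_int m..real_of_int m + 1} (\<lambda>x. 1 - \<sigma> x)
      \<le> integral {real_of_int m..real_of_int m + 1} (\<lambda>x. \<sigma> (- real_of_int m))"
    by (intro integral_le integrable_continuous_real continuous_intros)
      (auto simp: sigma_minus[symmetric] intro!: sigma_mono)
  moreover have "0 \<le> integral {real_of_int m..real_of_int m + 1} (\<lambda>x. 1 - \<sigma> x)"
    by (intro integral_nonneg integrable_continuous_real continuous_intros) (auto simp: sigma_le_1)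
  moreover have "integral {real_of_int m..real_of_int m + 1} (\<lambda>x. 1 - \<sigma> x) = 1 - sigma_avg (real_of_int m)"
    using has_integral_diff[OF has_integral_const_real[of 1] sigma_has_integral] by (simp add: integral_unique)
  ultimately show ?thesis
    using assms by (simp add: heaviside_defect_def)
qed

lemma heaviside_defect_decay:
  assumes "Sigma3 \<sigma> \<alpha>" "2 \<le> \<alpha>"
  obtains C where "\<And>m. \<bar>heaviside_defect m\<bar> \<le> C / (real_of_int \<bar>m\<bar> + 1)^3"
proof -
  obtain C where C: "C > 0" "\<And>t. 0 \<le> t \<Longrightarrow> \<sigma> (- t) \<le> C / (t + 1)^3"
    using sigma_cubic_decay[OF assms] by blast
  have nonneg: "\<bar>heaviside_defect m\<bar> \<le> C / (real_of_int m + 1)^3" if "0 \<le> m" for m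
    using abs_heaviside_defect_le[OF that] C(2)[of "real_of_int m"] that by simp
  have "\<bar>heaviside_defect m\<bar> \<le> 8 * C / (real_of_int \<bar>m\<bar> + 1)^3" for m
  proof (cases "0 \<le> m")
    case False
    define t where "t = real_of_int \<bar>m\<bar>"
    have t: "1 \<le> t" using False by (simp add: t_def)
    have "\<bar>heaviside_defect m\<bar> = \<bar>heaviside_defect (- 1 - m)\<bar>"
      by (simp add: heaviside_defect_minus)
    also have "\<dots> \<le> C / (t - 1 + 1)^3"
      using nonneg[of "- 1 - m"] False by (simp add: t_def)
    also have "\<dots> \<le> 8 * C / (t + 1)^3"
    proof -
      have "(t + 1)^3 \<le> (2 * t)^3" using t by (intro power_mono) auto
      then show ?thesis using C(1) t by (simp add: field_simps)
    qed
    finally show ?thesis by (simp add: t_def)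
  next
    case True
    then have "C / (real_of_int m + 1)^3 \<le> 8 * C / (real_of_int \<bar>m\<bar> + 1)^3"
      using C(1) by (simp add: divide_right_mono)
    then show ?thesis using nonneg[OF True] by linarith
  qed
  then show ?thesis using that by blast
qed

lemma integral_cell_phi_sigma:
  assumes n: "n > 0"
  shows "integral (cell n j) (\<lambda>x. phi_sigma \<sigma> (real n * x - real_of_int k))
           = (sigma_avg (real_of_int (j - k + 1)) - sigma_avg (real_of_int (j - k - 1))) / (2 * real n)"
proof -
  have "((\<lambda>x. \<sigma> (real n * x + (1 - real_of_int k)))
      has_integral sigma_avg (real_of_int (j - k + 1)) / real n) (cell n j)"
    using has_integral_sigma_affine[of "real n" "1 - real_of_int k" "real_of_int (j - k + 1)"] n
    by (simp add: cell_def algebra_simps)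
  moreover have "((\<lambda>x. \<sigma> (real n * x + (- 1 - real_of_int k)))
      has_integral sigma_avg (real_of_int (j - k - 1)) / real n) (cell n j)"
    using has_integral_sigma_affine[of "real n" "- 1 - real_of_int k" "real_of_int (j - k - 1)"] n
    by (simp add: cell_def algebra_simps)
  ultimately have "((\<lambda>x. phi_sigma \<sigma> (real n * x - real_of_int k)) has_integral
      (sigma_avg (real_of_int (j - k + 1)) / real n - sigma_avg (real_of_int (j - k - 1)) / real n) / 2) (cell n j)"
    unfolding phi_sigma_def by (intro has_integral_divide has_integral_diff) (simp_all add: algebra_simps)
  then show ?thesis by (simp add: integral_unique diff_divide_distrib)
qed

end

locale kantorovich_operator = symmetric_sigmoid +
  fixes a b :: real
  assumes a_less_b: "a < b" and sigma_1_less_1: "\<sigma> 1 < 1"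
begin

abbreviation "kmin n \<equiv> \<lceil>real n * a\<rceil>"
abbreviation "kmax n \<equiv> \<lfloor>real n * b\<rfloor> - 1"

definition denom :: "nat \<Rightarrow> real \<Rightarrow> real" where
  "denom n x = (\<Sum>k\<in>Kset a b n. phi_sigma \<sigma> (real n * x - real_of_int k))"

definition numer :: "nat \<Rightarrow> (real \<Rightarrow> real) \<Rightarrow> real \<Rightarrow> real" where
  "numer n f x = (\<Sum>k\<in>Kset a b n. cell_mean n f k * phi_sigma \<sigma> (real n * x - real_of_int k))"

lemma kantorovich_nn_eq: "kantorovich_nn \<sigma> a b n f x = numer n f x / denom n x"
  by (simp add: kantorovich_nn_def numer_def denom_def cell_mean_def cell_def)

lemma continuous_on_denom [continuous_intros]: "continuous_on S (denom n)"
  unfolding denom_def by (intro continuous_intros)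

lemma continuous_on_numer [continuous_intros]: "continuous_on S (numer n f)"
  unfolding numer_def by (intro continuous_intros)

lemma denom_eq:
  assumes "2 \<le> real n * (b - a)"
  shows "2 * denom n x = \<sigma> (real n * x - kmin n + 1) + \<sigma> (real n * x - kmin n)
                          - \<sigma> (real n * x - kmax n) - \<sigma> (real n * x - kmax n - 1)"
  unfolding denom_def Kset_eq using Kset_nonempty[OF assms] by (intro sum_phi_sigma) simp

lemma denom_le_1:
  assumes "2 \<le> real n * (b - a)"
  shows "denom n x \<le> 1"
proof -
  define A where "A = real n * x - kmin n"
  define B where "B = real n * x - kmax n"
  have "2 * denom n x = \<sigma> (A + 1) + \<sigma> A - \<sigma> B - \<sigma> (B - 1)"
    unfolding denom_eq[OF assms] A_def B_def ..
  then show ?thesis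
    using sigma_le_1[of "A + 1"] sigma_le_1[of A] sigma_nonneg[of B] sigma_nonneg[of "B - 1"] by linarith
qed

lemma denom_pos:
  assumes n: "2 \<le> real n * (b - a)" and x: "x \<in> {a..b}"
  shows "0 < denom n x"
proof -
  have "real n * a \<le> real n * x" "real n * x \<le> real n * b"
    using x by (auto intro: mult_left_mono)
  moreover have "real_of_int (kmin n) \<le> real_of_int (kmax n)"
    using Kset_nonempty[OF n] by (simp only: of_int_le_iff)
  moreover have "real_of_int (kmax n) = real_of_int \<lfloor>real n * b\<rfloor> - 1" by simp
  ultimately have "\<sigma> (real n * x - kmax n - 1) < \<sigma> (real n * x - kmin n + 1)"
    using of_int_ceiling_less_add_one[of "real n * a"] of_int_floor_gt_diff_one[of "real n * b"]
    by (intro sigma_strict_mono_below_1[OF sigma_1_less_1]) linarith+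
  moreover have "\<sigma> (real n * x - kmax n) \<le> \<sigma> (real n * x - kmin n)"
    using \<open>real_of_int (kmin n) \<le> real_of_int (kmax n)\<close> by (intro sigma_mono) simp
  ultimately show ?thesis using denom_eq[OF n, of x] by simp
qed

text \<open>At distance \<open>\<delta>\<close> from the endpoints the nodes cover \<open>x\<close> on both sides up to the tails
  of \<open>\<sigma>\<close>, so the partition of unity is almost exact.\<close>
lemma one_minus_denom_le:
  assumes n: "2 \<le> real n * (b - a)" and x: "x \<in> {a + \<delta>..b - \<delta>}"
  shows "1 - denom n x \<le> 2 * \<sigma> (2 - real n * \<delta>)"
proof -
  define A where "A = real n * x - kmin n"
  define B where "B = real n * x - kmax n"
  have "real n * (a + \<delta>) \<le> real n * x" "real n * x \<le> real n * (b - \<delta>)"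
    using x by (auto intro: mult_left_mono)
  then have "- A \<le> 2 - real n * \<delta>" "B \<le> 2 - real n * \<delta>"
    using of_int_ceiling_less_add_one[of "real n * a"] of_int_floor_gt_diff_one[of "real n * b"]
    by (simp_all add: A_def B_def algebra_simps)
  then have "1 - \<sigma> A \<le> \<sigma> (2 - real n * \<delta>)" "\<sigma> B \<le> \<sigma> (2 - real n * \<delta>)"
    using sigma_minus[of A] sigma_mono by (metis, blast)
  moreover have "\<sigma> A \<le> \<sigma> (A + 1)" "\<sigma> (B - 1) \<le> \<sigma> B"
    by (auto intro: sigma_mono)
  moreover have "2 * denom n x = \<sigma> (A + 1) + \<sigma> A - \<sigma> B - \<sigma> (B - 1)"
    unfolding denom_eq[OF n] A_def B_def ..
  ultimately show ?thesis by linarith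
qed

lemma abs_numer_le:
  assumes "n > 0" "continuous_on {a..b} f" "\<And>x. x \<in> {a..b} \<Longrightarrow> \<bar>f x\<bar> \<le> M"
  shows "\<bar>numer n f x\<bar> \<le> M * denom n x"
proof -
  have "\<bar>numer n f x\<bar>
      \<le> (\<Sum>k\<in>Kset a b n. \<bar>cell_mean n f k\<bar> * phi_sigma \<sigma> (real n * x - real_of_int k))"
    unfolding numer_def by (rule order_trans[OF sum_abs]) (simp add: abs_mult phi_sigma_nonneg)
  also have "\<dots> \<le> (\<Sum>k\<in>Kset a b n. M * phi_sigma \<sigma> (real n * x - real_of_int k))"
    using assms by (intro sum_mono mult_right_mono cell_mean_abs_le phi_sigma_nonneg)
  finally show ?thesis by (simp add: denom_def sum_distrib_left)
qed

lemma abs_numer_sub_le_err_sup: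
  assumes n: "2 \<le> real n * (b - a)" and f: "continuous_on {a..b} f" and x: "x \<in> {a..b}"
  shows "\<bar>numer n f x - f x * denom n x\<bar> \<le> err_sup \<sigma> a b f n"
proof -
  have n0: "n > 0" using n a_less_b by (cases n) auto
  obtain M where "\<forall>x\<in>{a..b}. \<bar>f x\<bar> \<le> M"
    using compact_imp_bounded[OF compact_continuous_image[OF f compact_Icc]]
    unfolding bounded_real by auto
  then have M: "\<And>x. x \<in> {a..b} \<Longrightarrow> \<bar>f x\<bar> \<le> M" by blast
  have "\<bar>kantorovich_nn \<sigma> a b n f y - f y\<bar> \<le> 2 * M" if y: "y \<in> {a..b}" for y
  proof -
    have "\<bar>numer n f y / denom n y\<bar> \<le> M"
      using abs_numer_le[OF n0 f M] denom_pos[OF n y] by (simp add: divide_le_eq)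
    then show ?thesis using M[OF y] abs_triangle_ineq4[of "numer n f y / denom n y" "f y"]
      by (simp add: kantorovich_nn_eq)
  qed
  then have "\<bar>kantorovich_nn \<sigma> a b n f x - f x\<bar> \<le> err_sup \<sigma> a b f n"
    unfolding err_sup_def by (intro cSUP_upper x bdd_aboveI2) auto
  moreover have "\<bar>numer n f x - f x * denom n x\<bar> = denom n x * \<bar>kantorovich_nn \<sigma> a b n f x - f x\<bar>"
    using denom_pos[OF n x] by (simp add: kantorovich_nn_eq abs_mult field_simps)
  moreover have "denom n x * \<bar>kantorovich_nn \<sigma> a b n f x - f x\<bar>
      \<le> \<bar>kantorovich_nn \<sigma> a b n f x - f x\<bar>"
    using denom_le_1[OF n] denom_pos[OF n x] by (simp add: mult_left_le_one_le)
  ultimately show ?thesis by linarith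
qed

lemma kantorovich_nn_const:
  assumes n: "2 \<le> real n * (b - a)" and f: "\<And>x. x \<in> {a..b} \<Longrightarrow> f x = c" and x: "x \<in> {a..b}"
  shows "kantorovich_nn \<sigma> a b n f x = c"
proof -
  have "n > 0" using n a_less_b by (cases n) auto
  then have "numer n f x = c * denom n x"
    unfolding numer_def denom_def using cell_mean_const[OF _ _ f] by (simp add: sum_distrib_left)
  then show ?thesis using denom_pos[OF n x] by (simp add: kantorovich_nn_eq)
qed

lemma integral_cell_numer:
  assumes "n > 0"
  shows "integral (cell n j) (numer n f)
           = (\<Sum>k\<in>Kset a b n. cell_mean n f k
                * (sigma_avg (real_of_int (j - k + 1)) - sigma_avg (real_of_int (j - k - 1)))) / (2 * real n)"
  unfolding numer_def sum_divide_distrib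
  by (subst integral_sum) (auto simp: integrable_continuous_real continuous_intros cell_def
      integral_cell_phi_sigma[OF assms, unfolded cell_def])

text \<open>Transposition: half the inner sum over \<open>j\<close> is the transposed operator applied to the node
  sequence \<open>G\<close>.\<close>
lemma sum_mult_integral_cell_numer:
  assumes "n > 0"
  shows "(\<Sum>j\<in>Kset a b n. G j * integral (cell n j) (numer n f))
           = (\<Sum>k\<in>Kset a b n. cell_mean n f k * (\<Sum>j\<in>Kset a b n. G j
                * (sigma_avg (real_of_int (j - k + 1)) - sigma_avg (real_of_int (j - k - 1))))) / (2 * real n)"
  unfolding integral_cell_numer[OF assms] sum_divide_distrib sum_distrib_left
  by (subst sum.swap) (auto intro!: sum.cong simp: algebra_simps)


lemma sum_cell_mean_mult_adjoint_eq:
  assumes n: "n > 0" and f: "continuous_on {a..b} f"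
  shows "(\<Sum>k\<in>Kset a b n. cell_mean n f k * ((\<Sum>j\<in>Kset a b n. G j
            * (sigma_avg (real_of_int (j - k + 1)) - sigma_avg (real_of_int (j - k - 1)))) - 2 * G k))
         = 2 * real n * (\<Sum>j\<in>Kset a b n. G j * integral (cell n j) (\<lambda>x. numer n f x - f x))"
proof -
  define Q where "Q k = (\<Sum>j\<in>Kset a b n. G j
      * (sigma_avg (real_of_int (j - k + 1)) - sigma_avg (real_of_int (j - k - 1))))" for k
  have "G j * integral (cell n j) (\<lambda>x. numer n f x - f x)
      = G j * integral (cell n j) (numer n f) - cell_mean n f j * (2 * G j) / (2 * real n)"
    if "j \<in> Kset a b n" for j
  proof -
    have "integral (cell n j) (\<lambda>x. numer n f x - f x) = integral (cell n j) (numer n f) - integral (cell n j) f"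
      unfolding cell_def
      by (intro integral_diff integrable_continuous_real continuous_intros
          continuous_on_cell_Kset[OF f n that, unfolded cell_def])
    then show ?thesis using n by (simp add: cell_mean_def right_diff_distrib)
  qed
  then have "(\<Sum>j\<in>Kset a b n. G j * integral (cell n j) (\<lambda>x. numer n f x - f x))
      = (\<Sum>k\<in>Kset a b n. cell_mean n f k * Q k) / (2 * real n)
        - (\<Sum>k\<in>Kset a b n. cell_mean n f k * (2 * G k)) / (2 * real n)"
    unfolding Q_def sum_mult_integral_cell_numer[OF n, symmetric]
    by (simp add: sum_subtractf sum_divide_distrib)
  then have "(\<Sum>k\<in>Kset a b n. cell_mean n f k * (Q k - 2 * G k))
      = 2 * real n * (\<Sum>j\<in>Kset a b n. G j * integral (cell n j) (\<lambda>x. numer n f x - f x))"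
    unfolding right_diff_distrib sum_subtractf using n by (simp add: field_simps)
  then show ?thesis by (simp only: Q_def)
qed

lemma abs_numer_sub_le_interior:
  assumes n: "2 \<le> real n * (b - a)" and f: "continuous_on {a..b} f"
    and M: "\<And>x. x \<in> {a..b} \<Longrightarrow> \<bar>f x\<bar> \<le> M"
    and x: "x \<in> {a + \<delta>..b - \<delta>}" and "0 \<le> \<delta>"
  shows "\<bar>numer n f x - f x\<bar> \<le> err_sup \<sigma> a b f n + 2 * M * \<sigma> (2 - real n * \<delta>)"
proof -
  have xab: "x \<in> {a..b}" using x \<open>0 \<le> \<delta>\<close> by auto
  have "0 \<le> 1 - denom n x" "1 - denom n x \<le> 2 * \<sigma> (2 - real n * \<delta>)"
    using denom_le_1[OF n, of x] one_minus_denom_le[OF n x] by auto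
  then have "\<bar>f x * (1 - denom n x)\<bar> \<le> M * (2 * \<sigma> (2 - real n * \<delta>))"
    unfolding abs_mult using M[OF xab] by (intro mult_mono) auto
  moreover have "numer n f x - f x = (numer n f x - f x * denom n x) - f x * (1 - denom n x)"
    by (simp add: algebra_simps)
  ultimately show ?thesis
    using abs_numer_sub_le_err_sup[OF n f xab] by linarith
qed
end

section \<open>Testing the error against primitives\<close>

context kantorovich_operator
begin

context
  fixes h :: "real \<Rightarrow> real" and L \<delta> :: real
  assumes h_lipschitz: "L-lipschitz_on UNIV h" and \<delta>_pos: "0 < \<delta>"
    and h_supp: "\<And>x. x \<notin> {a + \<delta><..<b - \<delta>} \<Longrightarrow> h x = 0" and h_mean: "integral {a..b} h = 0"
begin

lemma primitive_diff: "x \<le> y \<Longrightarrow> integral {a..y} h - integral {a..x} h = integral {x..y} h"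
  using h_supp \<delta>_pos by (intro integral_primitive_diff lipschitz_on_continuous_on[OF h_lipschitz]) auto

lemma primitive_eq_0:
  assumes "x \<notin> {a + \<delta><..<b - \<delta>}"
  shows "integral {a..x} h = 0"
proof (cases "x \<le> a + \<delta>")
  case True
  then have "integral {a..x} h = integral {a..x} (\<lambda>x. 0)"
    by (intro integral_cong h_supp) auto
  then show ?thesis by simp
next
  case False
  then have x: "b - \<delta> \<le> x" using assms by auto
  have zero: "integral {u..v} h = 0" if "b - \<delta> \<le> u" for u v
    using that by (subst integral_cong[of _ _ "\<lambda>x. 0"]) (auto intro: h_supp)
  show ?thesis
  proof (cases "x \<le> b")
    case True
    then show ?thesis using primitive_diff[OF True] zero[OF x] h_mean by simp
  next
    case False
    then show ?thesis using primitive_diff[of b x] zero[of b x] h_mean \<delta>_pos by simp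
  qed
qed

lemma abs_primitive_le:
  assumes x: "x \<in> {a..b}"
  shows "\<bar>integral {a..x} h\<bar> \<le> L * (b - a)^2"
proof -
  have L: "0 \<le> L" using lipschitz_on_nonneg[OF h_lipschitz] .
  have "h a = 0" using h_supp \<delta>_pos by simp
  then have "\<bar>h y\<bar> \<le> L * (b - a)" if "y \<in> {a..x}" for y
  proof -
    have "\<bar>h y\<bar> \<le> L * (y - a)"
      using lipschitz_on_normD[OF h_lipschitz, of y a] that \<open>h a = 0\<close> by simp
    also have "\<dots> \<le> L * (b - a)" using that x L by (intro mult_left_mono) auto
    finally show ?thesis .
  qed
  moreover have "continuous_on {a..x} h"
    using lipschitz_on_continuous_on[OF h_lipschitz] by (rule continuous_on_subset) simp
  ultimately have "norm (integral {a..x} h) \<le> L * (b - a) * (x - a)"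
    using x by (intro integral_bound) auto
  also have "\<dots> \<le> L * (b - a) * (b - a)"
    using x L a_less_b by (intro mult_left_mono) auto
  also have "\<dots> = L * (b - a)^2" by (simp add: power2_eq_square)
  finally show ?thesis by simp
qed

lemma primitive_nodes_eq_0:
  assumes n: "2 \<le> real n * \<delta>" and j: "j \<notin> {kmin n<..<kmax n}"
  shows "integral {a..real_of_int j / real n} h = 0"
proof (rule primitive_eq_0)
  have n0: "0 < real n" using n \<delta>_pos by (cases n) auto
  have "real_of_int j \<le> real n * (a + \<delta>) \<or> real n * (b - \<delta>) \<le> real_of_int j"
  proof (cases "j \<le> kmin n")
    case True
    then have "real_of_int j \<le> real_of_int (kmin n)" by (simp only: of_int_le_iff)
    then show ?thesis using of_int_ceiling_less_add_one[of "real n * a"] n by (simp add: algebra_simps)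
  next
    case False
    then have "kmax n \<le> j" using j by auto
    then have "real_of_int (kmax n) \<le> real_of_int j" by (simp only: of_int_le_iff)
    then show ?thesis using of_int_floor_gt_diff_one[of "real n * b"] n by (simp add: algebra_simps)
  qed
  then show "real_of_int j / real n \<notin> {a + \<delta><..<b - \<delta>}"
    using n0 by (auto simp: field_simps)
qed

lemma primitive_nodes_diff:
  assumes "n > 0"
  shows "integral {a..real_of_int (i + 1) / real n} h - integral {a..real_of_int i / real n} h
           = integral (cell n i) h"
  using assms by (subst primitive_diff) (auto simp: cell_def divide_right_mono)

text \<open>The transposed operator shifts the primitive by half a cell: it maps \<open>G k\<close> to
  \<open>G k - h(k/n)/(2n)\<close> up to \<open>O(1/n\<^sup>2)\<close>. This first-order term rules out \<open>o(1/n)\<close>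
  convergence.\<close>
lemma adjoint_primitive_approx:
  assumes nab: "2 \<le> real n * (b - a)" and n\<delta>: "2 \<le> real n * \<delta>" and k: "k \<in> Kset a b n"
    and C: "\<And>m. \<bar>heaviside_defect m\<bar> \<le> C / (real_of_int \<bar>m\<bar> + 1)^3"
  shows "\<bar>(\<Sum>j\<in>Kset a b n. integral {a..real_of_int j / real n} h
            * (sigma_avg (real_of_int (j - k + 1)) - sigma_avg (real_of_int (j - k - 1))))
          - 2 * integral {a..real_of_int k / real n} h + h (real_of_int k / real n) / real n\<bar>
         \<le> L * (2 + 9 * C) / real n ^ 2"
proof -
  have n: "n > 0" using nab a_less_b by (cases n) auto
  show ?thesis
    unfolding Kset_eq
  proof (rule sum_central_difference_approx[OF n h_lipschitz, where T = heaviside_defect])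
    show "integral {a..real_of_int (i + 1) / real n} h - integral {a..real_of_int i / real n} h
        = integral (cell n i) h" for i
      by (rule primitive_nodes_diff[OF n])
    show "integral {a..real_of_int i / real n} h = 0" if "i \<notin> {kmin n<..<kmax n}" for i
      by (rule primitive_nodes_eq_0[OF n\<delta> that])
    show "k \<in> {kmin n..kmax n}" using k by (simp add: Kset_eq)
    show "sigma_avg (real_of_int m) = heaviside_defect m + (if 0 \<le> m then 1 else 0)" for m
      by (simp add: heaviside_defect_def)
  qed (use heaviside_defect_minus C in auto)
qed

context
  fixes f :: "real \<Rightarrow> real" and M :: real
  assumes f_cont: "continuous_on {a..b} f" and f_bound: "\<And>x. x \<in> {a..b} \<Longrightarrow> \<bar>f x\<bar> \<le> M"
begin

text \<open>Only the nodes where the primitive of \<open>h\<close> is nonzero contribute, and their cells stay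
  \<open>\<delta>/2\<close> away from the endpoints, where \<open>numer n f\<close> is within the approximation error
  of \<open>f\<close>.\<close>
lemma abs_primitive_mult_integral_cell_le:
  assumes nab: "2 \<le> real n * (b - a)" and n\<delta>: "2 \<le> real n * \<delta>" and j: "j \<in> Kset a b n"
  shows "\<bar>integral {a..real_of_int j / real n} h * integral (cell n j) (\<lambda>x. numer n f x - f x)\<bar>
           \<le> L * (b - a)^2 * ((err_sup \<sigma> a b f n + 2 * M * \<sigma> (2 - real n * (\<delta> / 2))) / real n)"
    (is "\<bar>?G * ?I\<bar> \<le> _ * (?B / _)")
proof (cases "?G = 0")
  case True
  have "0 \<le> ?B"
    using abs_numer_sub_le_err_sup[OF nab f_cont, of a] f_bound[of a] a_less_b sigma_nonneg
    by (auto intro!: add_nonneg_nonneg mult_nonneg_nonneg)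
  then show ?thesis using True lipschitz_on_nonneg[OF h_lipschitz] by simp
next
  case False
  have n: "n > 0" using nab a_less_b by (cases n) auto
  have "real_of_int j / real n \<in> {a + \<delta><..<b - \<delta>}"
    using False primitive_eq_0[of "real_of_int j / real n"] by blast
  then have "cell n j \<subseteq> {a + \<delta> / 2..b - \<delta> / 2}"
    using n n\<delta> by (auto simp: cell_def field_simps)
  then have "\<bar>numer n f x - f x\<bar> \<le> ?B" if "x \<in> cell n j" for x
    using \<delta>_pos that by (intro abs_numer_sub_le_interior[OF nab f_cont f_bound]) auto
  then have "\<bar>?I\<bar> \<le> ?B / real n"
    by (intro integral_cell_bound n continuous_intros continuous_on_cell_Kset[OF f_cont n j])
  moreover have "real_of_int j / real n \<in> cell n j" using n by (simp add: cell_def divide_right_mono)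
  then have "\<bar>?G\<bar> \<le> L * (b - a)^2" using cell_subset_Kset[OF n j] by (intro abs_primitive_le) blast
  ultimately show ?thesis
    unfolding abs_mult using lipschitz_on_nonneg[OF h_lipschitz] by (intro mult_mono) auto
qed

lemma abs_sum_cell_mean_adjoint_le:
  assumes nab: "2 \<le> real n * (b - a)" and n\<delta>: "2 \<le> real n * \<delta>"
  shows "\<bar>\<Sum>k\<in>Kset a b n. cell_mean n f k
            * ((\<Sum>j\<in>Kset a b n. integral {a..real_of_int j / real n} h
                 * (sigma_avg (real_of_int (j - k + 1)) - sigma_avg (real_of_int (j - k - 1))))
               - 2 * integral {a..real_of_int k / real n} h)\<bar>
         \<le> 2 * real (card (Kset a b n)) * (L * (b - a)^2)
             * (err_sup \<sigma> a b f n + 2 * M * \<sigma> (2 - real n * (\<delta> / 2)))"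
proof -
  define B where "B = err_sup \<sigma> a b f n + 2 * M * \<sigma> (2 - real n * (\<delta> / 2))"
  have n: "n > 0" using nab a_less_b by (cases n) auto
  have "\<bar>\<Sum>j\<in>Kset a b n.
          integral {a..real_of_int j / real n} h * integral (cell n j) (\<lambda>x. numer n f x - f x)\<bar>
      \<le> real (card (Kset a b n)) * (L * (b - a)^2 * (B / real n))"
    unfolding B_def
    by (intro order_trans[OF sum_abs sum_bounded_above] abs_primitive_mult_integral_cell_le[OF nab n\<delta>])
  from mult_left_mono[OF this, of "2 * real n"] n show ?thesis
    unfolding sum_cell_mean_mult_adjoint_eq[OF n f_cont] B_def by (simp add: abs_mult)
qed

lemma abs_sum_cell_mean_adjoint_approx:
  assumes nab: "2 \<le> real n * (b - a)" and n\<delta>: "2 \<le> real n * \<delta>"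
    and C: "\<And>m. \<bar>heaviside_defect m\<bar> \<le> C / (real_of_int \<bar>m\<bar> + 1)^3"
  shows "\<bar>\<Sum>k\<in>Kset a b n. cell_mean n f k
            * ((\<Sum>j\<in>Kset a b n. integral {a..real_of_int j / real n} h
                 * (sigma_avg (real_of_int (j - k + 1)) - sigma_avg (real_of_int (j - k - 1))))
               - 2 * integral {a..real_of_int k / real n} h + h (real_of_int k / real n) / real n)\<bar>
         \<le> real (card (Kset a b n)) * (M * (L * (2 + 9 * C) / real n ^ 2))"
proof (intro order_trans[OF sum_abs sum_bounded_above])
  fix k assume k: "k \<in> Kset a b n"
  have n: "n > 0" using nab a_less_b by (cases n) auto
  have "0 \<le> M" using f_bound[of a] a_less_b by auto
  then show "\<bar>cell_mean n f k * ((\<Sum>j\<in>Kset a b n. integral {a..real_of_int j / real n} h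
            * (sigma_avg (real_of_int (j - k + 1)) - sigma_avg (real_of_int (j - k - 1))))
          - 2 * integral {a..real_of_int k / real n} h + h (real_of_int k / real n) / real n)\<bar>
      \<le> M * (L * (2 + 9 * C) / real n ^ 2)"
    unfolding abs_mult using cell_mean_abs_le[OF n k f_cont f_bound] adjoint_primitive_approx[OF nab n\<delta> k C]
    by (intro mult_mono) auto
qed

lemma abs_integral_mult_le:
  assumes nab: "2 \<le> real n * (b - a)" and n\<delta>: "2 \<le> real n * \<delta>"
    and C: "\<And>m. \<bar>heaviside_defect m\<bar> \<le> C / (real_of_int \<bar>m\<bar> + 1)^3"
  shows "\<bar>integral {a..b} (\<lambda>x. f x * h x)\<bar>
           \<le> (b - a) * (M * L * (3 + 9 * C) / real n + 2 * L * (b - a)^2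
                 * (real n * err_sup \<sigma> a b f n + 2 * M * (real n * \<sigma> (2 - real n * (\<delta> / 2)))))"
proof -
  define G where "G j = integral {a..real_of_int j / real n} h" for j
  define A where "A k = (\<Sum>j\<in>Kset a b n. G j
      * (sigma_avg (real_of_int (j - k + 1)) - sigma_avg (real_of_int (j - k - 1)))) - 2 * G k" for k
  define c where "c = real (card (Kset a b n))"
  define E where "E = err_sup \<sigma> a b f n + 2 * M * \<sigma> (2 - real n * (\<delta> / 2))"
  have n: "n > 0" using nab a_less_b by (cases n) auto
  have L0: "0 \<le> L" using lipschitz_on_nonneg[OF h_lipschitz] .
  have M0: "0 \<le> M" using f_bound[of a] a_less_b by auto
  have C0: "0 \<le> C" using C[of 0] abs_ge_zero[of "heaviside_defect 0"] by simp
  have E0: "0 \<le> E"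
    using abs_numer_sub_le_err_sup[OF nab f_cont, of a] a_less_b M0 sigma_nonneg
    by (auto simp: E_def intro!: add_nonneg_nonneg mult_nonneg_nonneg)
  have c: "c \<le> real n * (b - a)" unfolding c_def using a_less_b by (intro card_Kset_le) simp
  have riemann: "\<bar>integral {a..b} (\<lambda>x. f x * h x)
      - (\<Sum>k\<in>Kset a b n. cell_mean n f k * h (real_of_int k / real n)) / real n\<bar> \<le> c * (M * L / real n ^ 2)"
    unfolding c_def using n\<delta> by (intro riemann_sum_cell_means_approx[OF n nab _ f_cont f_bound h_lipschitz h_supp]) auto
  have approx: "\<bar>\<Sum>k\<in>Kset a b n. cell_mean n f k * (A k + h (real_of_int k / real n) / real n)\<bar>
      \<le> c * (M * (L * (2 + 9 * C) / real n ^ 2))"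
    unfolding c_def A_def G_def by (rule abs_sum_cell_mean_adjoint_approx[OF nab n\<delta> C])
  have pairing: "\<bar>\<Sum>k\<in>Kset a b n. cell_mean n f k * A k\<bar> \<le> 2 * c * (L * (b - a)^2) * E"
    unfolding A_def G_def c_def E_def by (rule abs_sum_cell_mean_adjoint_le[OF nab n\<delta>])
  have "(\<Sum>k\<in>Kset a b n. cell_mean n f k * h (real_of_int k / real n)) / real n
      = (\<Sum>k\<in>Kset a b n. cell_mean n f k * (A k + h (real_of_int k / real n) / real n))
        - (\<Sum>k\<in>Kset a b n. cell_mean n f k * A k)"
    by (simp add: sum_divide_distrib sum_subtractf[symmetric] algebra_simps)
  then have "\<bar>integral {a..b} (\<lambda>x. f x * h x)\<bar>
      \<le> c * (M * L / real n ^ 2) + c * (M * (L * (2 + 9 * C) / real n ^ 2)) + 2 * c * (L * (b - a)^2) * E"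
    using riemann approx pairing by (smt (verit))
  also have "\<dots> = c * (M * L * (3 + 9 * C) / real n ^ 2) + c * (2 * L * (b - a)^2 * E)"
    using n by (simp add: field_simps)
  also have "\<dots> \<le> real n * (b - a) * (M * L * (3 + 9 * C) / real n ^ 2)
      + real n * (b - a) * (2 * L * (b - a)^2 * E)"
    using c L0 M0 C0 E0 by (intro add_mono mult_right_mono) auto
  also have "\<dots> = (b - a) * (M * L * (3 + 9 * C) / real n + 2 * L * (b - a)^2
      * (real n * err_sup \<sigma> a b f n + 2 * M * (real n * \<sigma> (2 - real n * (\<delta> / 2)))))"
    using n by (simp add: E_def power2_eq_square field_simps)
  finally show ?thesis .
qed

lemma integral_mult_eq_0_if_err_sup_small:
  assumes decay: "Sigma3 \<sigma> \<alpha>" "2 \<le> \<alpha>" and small: "err_sup \<sigma> a b f \<in> o(\<lambda>n. 1 / real n)"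
  shows "integral {a..b} (\<lambda>x. f x * h x) = 0"
proof -
  obtain C where C: "\<And>m. \<bar>heaviside_defect m\<bar> \<le> C / (real_of_int \<bar>m\<bar> + 1)^3"
    using heaviside_defect_decay[OF decay] by blast
  define B where "B n = (b - a) * (M * L * (3 + 9 * C) / real n + 2 * L * (b - a)^2
      * (real n * err_sup \<sigma> a b f n + 2 * M * (real n * \<sigma> (2 - real n * (\<delta> / 2)))))" for n
  have "(\<lambda>n. err_sup \<sigma> a b f n / (1 / real n)) \<longlonglongrightarrow> 0"
    using smalloD_tendsto[OF small] .
  then have "(\<lambda>n. real n * err_sup \<sigma> a b f n) \<longlonglongrightarrow> 0"
    by (simp add: mult.commute)
  then have "B \<longlonglongrightarrow> (b - a) * (0 + 2 * L * (b - a)^2 * (0 + 2 * M * 0))"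
    unfolding B_def using \<delta>_pos
    by (intro tendsto_intros tendsto_mult_sigma_linear[OF decay]) auto
  moreover have "\<forall>\<^sub>F n in sequentially. \<bar>integral {a..b} (\<lambda>x. f x * h x)\<bar> \<le> B n"
  proof -
    have "0 < b - a" using a_less_b by simp
    then have "\<forall>\<^sub>F n in sequentially. 2 \<le> real n * (b - a)" by real_asymp
    moreover have "\<forall>\<^sub>F n in sequentially. 2 \<le> real n * \<delta>" using \<delta>_pos by real_asymp
    ultimately show ?thesis
    proof eventually_elim
      case (elim n)
      then show ?case unfolding B_def by (intro abs_integral_mult_le C)
    qed
  qed
  ultimately have "\<bar>integral {a..b} (\<lambda>x. f x * h x)\<bar> \<le> 0"
    by (intro tendsto_lowerbound[where F = sequentially]) auto
  then show ?thesis by simp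
qed

end

end

end

section \<open>Saturation\<close>

context kantorovich_operator
begin

lemma integral_mult_tent_eq:
  assumes decay: "Sigma3 \<sigma> \<alpha>" "2 \<le> \<alpha>" and small: "err_sup \<sigma> a b f \<in> o(\<lambda>n. 1 / real n)"
    and f: "continuous_on {a..b} f" and e: "0 < e"
    and c: "c \<in> {a + 2 * e..b - 2 * e}" and d: "d \<in> {a + 2 * e..b - 2 * e}"
  shows "integral {a..b} (\<lambda>x. f x * tent c e x) = integral {a..b} (\<lambda>x. f x * tent d e x)"
proof -
  obtain M where "\<forall>x\<in>{a..b}. \<bar>f x\<bar> \<le> M"
    using compact_imp_bounded[OF compact_continuous_image[OF f compact_Icc]]
    unfolding bounded_real by auto
  then have M: "\<And>x. x \<in> {a..b} \<Longrightarrow> \<bar>f x\<bar> \<le> M" by blast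
  have tc: "(tent c e has_integral e^2) {a..b}" and td: "(tent d e has_integral e^2) {a..b}"
    using c d e by (auto intro!: tent_has_integral)
  have "integral {a..b} (\<lambda>x. f x * (tent c e x - tent d e x)) = 0"
  proof (rule integral_mult_eq_0_if_err_sup_small[OF _ e _ _ f M decay small])
    show "(1 + 1)-lipschitz_on UNIV (\<lambda>x. tent c e x - tent d e x)"
      by (intro lipschitz_on_diff lipschitz_on_tent)
    show "tent c e x - tent d e x = 0" if "x \<notin> {a + e<..<b - e}" for x
    proof -
      have "e \<le> \<bar>x - c\<bar>" "e \<le> \<bar>x - d\<bar>" using that c d by auto
      then show ?thesis by (simp add: tent_eq_0)
    qed
    show "integral {a..b} (\<lambda>x. tent c e x - tent d e x) = 0"
      using has_integral_diff[OF tc td] by (simp add: integral_unique)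
  qed
  then show ?thesis
    by (simp add: right_diff_distrib integral_diff integrable_continuous_real continuous_intros f)
qed

lemma eq_if_err_sup_small:
  assumes decay: "Sigma3 \<sigma> \<alpha>" "2 \<le> \<alpha>" and small: "err_sup \<sigma> a b f \<in> o(\<lambda>n. 1 / real n)"
    and f: "continuous_on {a..b} f" and c: "c \<in> {a<..<b}" and d: "d \<in> {a<..<b}"
  shows "f c = f d"
proof -
  have bound: "\<bar>f c - f d\<bar> \<le> 2 * \<eta>" if \<eta>: "0 < \<eta>" for \<eta>
  proof -
    have "c \<in> {a..b}" "d \<in> {a..b}" using c d by auto
    then have "\<exists>e>0. \<forall>x\<in>{a..b}. dist x y < e \<longrightarrow> dist (f x) (f y) < \<eta>"
      if "y \<in> {c, d}" for y
      using f \<eta> that unfolding continuous_on_iff by blast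
    then obtain e1 e2 where
      e1: "0 < e1" "\<And>x. x \<in> {a..b} \<Longrightarrow> dist x c < e1 \<Longrightarrow> dist (f x) (f c) < \<eta>" and
      e2: "0 < e2" "\<And>x. x \<in> {a..b} \<Longrightarrow> dist x d < e2 \<Longrightarrow> dist (f x) (f d) < \<eta>"
      by (metis insertI1 insertI2 singletonI)
    define e where
      "e = min (min e1 e2) (min (min ((c - a) / 2) ((b - c) / 2)) (min ((d - a) / 2) ((b - d) / 2)))"
    have e: "0 < e" "e \<le> e1" "e \<le> e2"
      using e1 e2 c d by (simp_all add: e_def)
    have "e \<le> (c - a) / 2" "e \<le> (b - c) / 2" "e \<le> (d - a) / 2" "e \<le> (b - d) / 2"
      unfolding e_def by linarith+
    then have cd: "c \<in> {a + 2 * e..b - 2 * e}" "d \<in> {a + 2 * e..b - 2 * e}" by auto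
    have "\<bar>integral {a..b} (\<lambda>x. f x * tent c e x) - f c * e^2\<bar> \<le> \<eta> * e^2"
      using cd e e1 by (intro integral_mult_tent_approx f less_imp_le) (auto simp: dist_real_def)
    moreover have "\<bar>integral {a..b} (\<lambda>x. f x * tent d e x) - f d * e^2\<bar> \<le> \<eta> * e^2"
      using cd e e2 by (intro integral_mult_tent_approx f less_imp_le) (auto simp: dist_real_def)
    ultimately have "\<bar>f c * e^2 - f d * e^2\<bar> \<le> (2 * \<eta>) * e^2"
      using integral_mult_tent_eq[OF decay small f e(1) cd] by (auto simp: abs_le_iff)
    then have "\<bar>f c - f d\<bar> * e^2 \<le> (2 * \<eta>) * e^2"
      by (simp add: abs_mult left_diff_distrib[symmetric])
    then show ?thesis using e by simp
  qed
  have "\<bar>f c - f d\<bar> \<le> 0 + \<epsilon>" if "0 < \<epsilon>" for \<epsilon>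
    using bound[of "\<epsilon> / 2"] that by simp
  then have "\<bar>f c - f d\<bar> \<le> 0" by (rule field_le_epsilon)
  then show ?thesis by simp
qed

lemma constant_if_err_sup_small:
  assumes decay: "Sigma3 \<sigma> \<alpha>" "2 \<le> \<alpha>" and small: "err_sup \<sigma> a b f \<in> o(\<lambda>n. 1 / real n)"
    and f: "continuous_on {a..b} f"
  shows "\<exists>c. \<forall>x\<in>{a..b}. f x = c"
proof -
  define m where "m = (a + b) / 2"
  have m: "m \<in> {a<..<b}" using a_less_b by (simp add: m_def)
  have "{a<..<b} \<subseteq> {x \<in> {a..b}. f x = f m}"
  proof
    fix x assume x: "x \<in> {a<..<b}"
    then show "x \<in> {x \<in> {a..b}. f x = f m}"
      using eq_if_err_sup_small[OF decay small f x m] by simp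
  qed
  moreover have "closed {x \<in> {a..b}. f x = f m}"
    using continuous_closed_preimage_constant[OF f] by simp
  ultimately have "closure {a<..<b} \<subseteq> {x \<in> {a..b}. f x = f m}"
    by (rule closure_minimal)
  then show ?thesis using a_less_b by auto
qed

lemma err_sup_small_if_constant:
  assumes const: "\<And>x. x \<in> {a..b} \<Longrightarrow> f x = c"
  shows "err_sup \<sigma> a b f \<in> o(\<lambda>n. 1 / real n)"
proof -
  have "0 < b - a" using a_less_b by simp
  then have "\<forall>\<^sub>F n in sequentially. 2 \<le> real n * (b - a)" by real_asymp
  then have "\<forall>\<^sub>F n in sequentially. err_sup \<sigma> a b f n = 0"
  proof eventually_elim
    case (elim n)
    have "err_sup \<sigma> a b f n = (SUP x\<in>{a..b}. 0)"
      unfolding err_sup_def using kantorovich_nn_const[OF elim const] const by (intro SUP_cong) auto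
    then show ?case using a_less_b by simp
  qed
  then show ?thesis
    by (intro landau_o.smallI) (auto elim!: eventually_mono)
qed

end

theorem theorem6p1:
  fixes \<sigma> f :: "real \<Rightarrow> real" and a b \<alpha> :: real
  assumes "a < b"
    and "sigmoidal \<sigma>" and "Sigma1 \<sigma>" and "Sigma2 \<sigma>" and "Sigma3 \<sigma> \<alpha>"
    and "\<sigma> 1 < 1" and "\<alpha> > 2"
    and "continuous_on {a..b} f"
  shows "err_sup \<sigma> a b f \<in> o(\<lambda>n. 1 / real n) \<longleftrightarrow> (\<exists>c. \<forall>x\<in>{a..b}. f x = c)"
proof -
  interpret kantorovich_operator \<sigma> a b
    using assms by unfold_locales auto
  show ?thesis
    using constant_if_err_sup_small[OF \<open>Sigma3 \<sigma> \<alpha>\<close> _ _ \<open>continuous_on {a..b} f\<close>]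
      err_sup_small_if_constant \<open>\<alpha> > 2\<close> by fastforce
qed

end
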